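(* Let $\mathcal G$ be a CFG and $\sigma$ a state of $\mathcal G$ with $\Pr_{term}(\mathcal G(\sigma))>0$. Then there is $N\in\mathbb N$ such that for every scheduler $\mathfrak s$ there exists a finite path of length at most $N$ that starts at $\sigma$, ends at the terminal state $\sigma_\bot$, and is consistent with $\mathfrak s$. In other words, the length of the shortest terminating finite path from $\sigma$ consistent with $\mathfrak s$ is bounded uniformly over all schedulers $\mathfrak s$.
   Context: A probabilistic control flow graph (CFG) is a tuple $\mathcal G=(L,V,l_{init},\mathbf x_{init},\mapsto,G,\mathsf{Pr},\mathsf{Upd})$. Here $L$ is a finite set of locations, partitioned into assignment, nondeterministic and probabilistic locations. $V=\{x_1,\dots,x_n\}$ is a finite set of variables ranging over $\mathbb Q$. $l_{init}\in L$ and $\mathbf x_{init}\in\mathbb Q^V$. $\mapsto\subseteq L\times L$ is a finite set of transitions. $G$ assigns to each transition a Boolean guard, namely a Boolean combination of arithmetic atomic formulas over the variables. $\mathsf{Pr}$ assigns to each transition leaving a probabilistic location a rational arithmetic expression over $V$; at every valuation each of these values is $>0$, and the values of the enabled outgoing transitions sum to $1$. $\mathsf{Upd}$ assigns to each transition leaving an assignment location an update $(j,u)$, with $u$ an arithmetic expression; assignment locations have at most one outgoing transition. A state is a pair $(l,\mathbf x)$. A transition $(l,l')$ is enabled at $(l,\mathbf x)$ if its guard holds there; in that case $(l',\mathbf x')$ is a successor, where $\mathbf x'=\mathbf x$, except that for an assignment location $\mathbf x'[j]=u(\mathbf x)$. Every state has at least one, and hence finitely many, successors. A finite path is a sequence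 of states in which each state is a successor of the previous one. A run is an infinite such sequence starting at the initial state. A scheduler $\mathfrak s$ maps each finite path ending at a nondeterministic state to a successor of that state; no measurability restriction is imposed. A path is consistent with $\mathfrak s$ if every nondeterministic step in it follows $\mathfrak s$. Each scheduler $\mathfrak s$ induces a probability measure $\mathbb P_{\mathfrak s}$ on runs, generated by cylinder sets: probabilistic states move to successors with probabilities given by $\mathsf{Pr}$, and nondeterministic choices follow $\mathfrak s$. $\mathcal G(\sigma)$ denotes $\mathcal G$ with initial state $\sigma$. There is a distinguished terminal state $\sigma_\bot=(l_{out},\mathbf 0)$. The termination probability is $\Pr_{term}(\mathcal G)=\inf_{\mathfrak s}\mathbb P_{\mathfrak s}[\Diamond\sigma_\bot]$, where $\Diamond\sigma_\bot$ is the set of runs that visit $\sigma_\bot$. *)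

theory Defs
  imports "HOL-Library.Extended_Nonnegative_Real"
begin

type_synonym 'v valuation = "'v \<Rightarrow> rat"

datatype 'v aexp =
    Const rat
  | Var 'v
  | Neg "'v aexp"
  | Plus "'v aexp" "'v aexp"
  | Minus "'v aexp" "'v aexp"
  | Times "'v aexp" "'v aexp"
  | Divide "'v aexp" "'v aexp"

primrec aval :: "'v aexp \<Rightarrow> 'v valuation \<Rightarrow> rat" where
  "aval (Const c) x = c"
| "aval (Var v) x = x v"
| "aval (Neg a) x = - aval a x"
| "aval (Plus a b) x = aval a x + aval b x"
| "aval (Minus a b) x = aval a x - aval b x"
| "aval (Times a b) x = aval a x * aval b x"
| "aval (Divide a b) x = aval a x / aval b x"

datatype cmp = CLe | CLt | CEq

datatype 'v bexp =
    BTrue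
  | BFalse
  | Atom cmp "'v aexp" "'v aexp"
  | BNot "'v bexp"
  | BAnd "'v bexp" "'v bexp"
  | BOr "'v bexp" "'v bexp"

primrec cval :: "cmp \<Rightarrow> rat \<Rightarrow> rat \<Rightarrow> bool" where
  "cval CLe a b = (a \<le> b)"
| "cval CLt a b = (a < b)"
| "cval CEq a b = (a = b)"

primrec bval :: "'v bexp \<Rightarrow> 'v valuation \<Rightarrow> bool" where
  "bval BTrue x = True"
| "bval BFalse x = False"
| "bval (Atom c a b) x = cval c (aval a x) (aval b x)"
| "bval (BNot b) x = (\<not> bval b x)"
| "bval (BAnd b1 b2) x = (bval b1 x \<and> bval b2 x)"
| "bval (BOr b1 b2) x = (bval b1 x \<or> bval b2 x)"

datatype lkind = AssignLoc | NondetLoc | ProbLoc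

text \<open>The set of locations L is the finite type 'l, the set of variables V is the
finite type 'v. The initial state is irrelevant for the statement (which uses G(sigma)).\<close>

record ('l, 'v) cfg =
  kind  :: "'l \<Rightarrow> lkind"
  linit :: 'l
  xinit :: "'v valuation"
  trans :: "('l \<times> 'l) set"
  guard :: "'l \<times> 'l \<Rightarrow> 'v bexp"
  prb   :: "'l \<times> 'l \<Rightarrow> 'v aexp"
  upd   :: "'l \<times> 'l \<Rightarrow> 'v \<times> 'v aexp"
  lout  :: 'l

type_synonym ('l, 'v) state = "'l \<times> 'v valuation"

definition enabled :: "('l, 'v) cfg \<Rightarrow> 'l \<times> 'l \<Rightarrow> 'v valuation \<Rightarrow> bool" where
  "enabled G t x \<longleftrightarrow> t \<in> trans G \<and> bval (guard G t) x"

definition succ :: "('l, 'v) cfg \<Rightarrow> ('l, 'v) state \<Rightarrow> ('l, 'v) state \<Rightarrow> bool" where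
  "succ G s s' \<longleftrightarrow>
     enabled G (fst s, fst s') (snd s) \<and>
     snd s' = (if kind G (fst s) = AssignLoc
               then (let (j, u) = upd G (fst s, fst s') in (snd s)(j := aval u (snd s)))
               else snd s)"

definition wf_cfg :: "('l, 'v) cfg \<Rightarrow> bool" where
  "wf_cfg G \<longleftrightarrow>
     (\<forall>l. kind G l = AssignLoc \<longrightarrow> card {l'. (l, l') \<in> trans G} \<le> 1) \<and>
     (\<forall>l l' x. kind G l = ProbLoc \<longrightarrow> (l, l') \<in> trans G \<longrightarrow> aval (prb G (l, l')) x > 0) \<and>
     (\<forall>l x. kind G l = ProbLoc \<longrightarrow>
        (\<Sum>l' \<in> {l'. enabled G (l, l') x}. aval (prb G (l, l')) x) = 1) \<and>
     (\<forall>s. \<exists>s'. succ G s s')"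

definition is_path :: "('l, 'v) cfg \<Rightarrow> ('l, 'v) state list \<Rightarrow> bool" where
  "is_path G \<pi> \<longleftrightarrow> \<pi> \<noteq> [] \<and> (\<forall>i. Suc i < length \<pi> \<longrightarrow> succ G (\<pi> ! i) (\<pi> ! Suc i))"

text \<open>Schedulers: arbitrary (not necessarily measurable) maps from finite paths ending in a
nondeterministic state to a successor of that state.\<close>

definition schedulers :: "('l, 'v) cfg \<Rightarrow> (('l, 'v) state list \<Rightarrow> ('l, 'v) state) set" where
  "schedulers G = {sch. \<forall>\<pi>. is_path G \<pi> \<longrightarrow> kind G (fst (last \<pi>)) = NondetLoc
                              \<longrightarrow> succ G (last \<pi>) (sch \<pi>)}"

definition consistent ::
  "('l, 'v) cfg \<Rightarrow> (('l, 'v) state list \<Rightarrow> ('l, 'v) state) \<Rightarrow> ('l, 'v) state list \<Rightarrow> bool" where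
  "consistent G sch \<pi> \<longleftrightarrow>
     (\<forall>i. Suc i < length \<pi> \<longrightarrow> kind G (fst (\<pi> ! i)) = NondetLoc \<longrightarrow>
          \<pi> ! Suc i = sch (take (Suc i) \<pi>))"

definition step_prob ::
  "('l, 'v) cfg \<Rightarrow> (('l, 'v) state list \<Rightarrow> ('l, 'v) state) \<Rightarrow> ('l, 'v) state list \<Rightarrow> nat \<Rightarrow> ennreal" where
  "step_prob G sch \<pi> i =
     (case kind G (fst (\<pi> ! i)) of
        ProbLoc \<Rightarrow> ennreal (real_of_rat (aval (prb G (fst (\<pi> ! i), fst (\<pi> ! Suc i))) (snd (\<pi> ! i))))
      | NondetLoc \<Rightarrow> (if \<pi> ! Suc i = sch (take (Suc i) \<pi>) then 1 else 0)
      | AssignLoc \<Rightarrow> 1)"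

text \<open>Measure P_sch of the cylinder set of runs extending the finite path pi (pi starts at the
initial state of G(sigma)).\<close>

definition cyl_prob ::
  "('l, 'v) cfg \<Rightarrow> (('l, 'v) state list \<Rightarrow> ('l, 'v) state) \<Rightarrow> ('l, 'v) state list \<Rightarrow> ennreal" where
  "cyl_prob G sch \<pi> = (\<Prod>i < length \<pi> - 1. step_prob G sch \<pi> i)"

definition term_state :: "('l, 'v) cfg \<Rightarrow> ('l, 'v) state" where
  "term_state G = (lout G, (\<lambda>_. 0))"

text \<open>P_sch[ \<diamond> sigma_bot ] in G(sigma): the event of visiting sigma_bot is the increasing union
over n of the events "sigma_bot visited among the first n+1 states", each of which is the
disjoint union of the cylinder sets of the paths of n steps from sigma that visit sigma_bot.\<close>

definition reach_prob ::
  "('l, 'v) cfg \<Rightarrow> ('l, 'v) state \<Rightarrow> (('l, 'v) state list \<Rightarrow> ('l, 'v) state) \<Rightarrow> ennreal" where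
  "reach_prob G \<sigma> sch =
     (SUP n. \<Sum>\<pi> \<in> {\<pi>. is_path G \<pi> \<and> hd \<pi> = \<sigma> \<and> length \<pi> = Suc n \<and> term_state G \<in> set \<pi>}.
               cyl_prob G sch \<pi>)"

definition pr_term :: "('l, 'v) cfg \<Rightarrow> ('l, 'v) state \<Rightarrow> ennreal" where
  "pr_term G \<sigma> = (INF sch \<in> schedulers G. reach_prob G \<sigma> sch)"

end

theory Submission
  imports Defs
begin

text \<open>
  View the CFG as a game in which one player resolves assignment and probabilistic choices
  and the scheduler resolves nondeterministic ones. Let \<open>attractor_upto G k\<close> be the set
  of states from which the first player can force \<open>\<sigma>\<^sub>\<bottom>\<close> within \<open>k\<close> steps.
  If \<open>\<sigma>\<close> lies in it, every scheduler admits a consistent path reaching \<open>\<sigma>\<^sub>\<bottom>\<close> in at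
  most \<open>k\<close> steps. Otherwise, since every state has finitely many successors, a nondeterministic
  state outside all attractors has a successor outside all of them, while every successor of any
  other such state is outside as well. A scheduler that always picks such a successor never
  reaches \<open>\<sigma>\<^sub>\<bottom>\<close>: every terminating path is inconsistent with it, so it terminates with
  probability \<open>0\<close>, contradicting \<open>Pr\<^sub>t\<^sub>e\<^sub>r\<^sub>m(\<G>(\<sigma>)) > 0\<close>.
\<close>

lemma finite_subset_UN_mono:
  fixes f :: "nat \<Rightarrow> 'a set"
  assumes "finite A" "mono f" "A \<subseteq> (\<Union>k. f k)"
  shows "\<exists>k. A \<subseteq> f k"
  using assms(1,3)
proof (induction A rule: finite_induct)
  case (insert x A)
  then obtain j k where "x \<in> f j" "A \<subseteq> f k" by blast
  then have "insert x A \<subseteq> f (max j k)"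
    using monoD[OF assms(2)] by (meson insert_subset max.cobounded1 max.cobounded2 subsetD subset_trans)
  then show ?case ..
qed simp

lemma finite_successors: "finite {s'. succ G (s :: ('l::finite, 'v) state) s'}"
proof -
  have "{s'. succ G s s'} \<subseteq> (\<lambda>l. (l, if kind G (fst s) = AssignLoc
               then (let (j, u) = upd G (fst s, l) in (snd s)(j := aval u (snd s)))
               else snd s)) ` UNIV"
    by (auto simp: succ_def image_iff intro!: prod_eqI)
  then show ?thesis by (rule finite_subset) simp
qed

lemma is_path_snoc_iff:
  assumes "\<pi> \<noteq> []"
  shows "is_path G (\<pi> @ [s]) \<longleftrightarrow> is_path G \<pi> \<and> succ G (last \<pi>) s"
proof -
  obtain n where n: "length \<pi> = Suc n" using assms by (cases \<pi>) auto
  then have "last \<pi> = \<pi> ! n" using assms by (simp add: last_conv_nth)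
  then show ?thesis
    using assms n unfolding is_path_def by (auto simp: nth_append less_Suc_eq)
qed

lemma consistent_snoc_iff:
  assumes "\<pi> \<noteq> []"
  shows "consistent G sch (\<pi> @ [s]) \<longleftrightarrow>
     consistent G sch \<pi> \<and> (kind G (fst (last \<pi>)) = NondetLoc \<longrightarrow> s = sch \<pi>)"
proof -
  obtain n where n: "length \<pi> = Suc n" using assms by (cases \<pi>) auto
  then have "last \<pi> = \<pi> ! n" using assms by (simp add: last_conv_nth)
  then show ?thesis
    using assms n unfolding consistent_def by (auto simp: nth_append less_Suc_eq)
qed

lemma cyl_prob_eq_0_if_not_consistent:
  assumes "\<not> consistent G sch \<pi>"
  shows "cyl_prob G sch \<pi> = 0"
proof -
  obtain i where i: "Suc i < length \<pi>" "kind G (fst (\<pi> ! i)) = NondetLoc"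
    "\<pi> ! Suc i \<noteq> sch (take (Suc i) \<pi>)"
    using assms unfolding consistent_def by blast
  then have "step_prob G sch \<pi> i = 0" by (simp add: step_prob_def)
  with i(1) show ?thesis unfolding cyl_prob_def by (intro prod_zero) auto
qed

fun attractor_upto :: "('l, 'v) cfg \<Rightarrow> nat \<Rightarrow> ('l, 'v) state set" where
  "attractor_upto G 0 = {term_state G}"
| "attractor_upto G (Suc k) = {term_state G} \<union>
     {s. if kind G (fst s) = NondetLoc
         then \<forall>s'. succ G s s' \<longrightarrow> s' \<in> attractor_upto G k
         else \<exists>s'. succ G s s' \<and> s' \<in> attractor_upto G k}"

definition attractor :: "('l, 'v) cfg \<Rightarrow> ('l, 'v) state set" where
  "attractor G = (\<Union>k. attractor_upto G k)"

lemma mem_attractor_upto_Suc: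
  "s \<in> attractor_upto G (Suc k) \<longleftrightarrow> s = term_state G \<or>
     (if kind G (fst s) = NondetLoc
      then \<forall>s'. succ G s s' \<longrightarrow> s' \<in> attractor_upto G k
      else \<exists>s'. succ G s s' \<and> s' \<in> attractor_upto G k)"
  by simp

declare attractor_upto.simps(2) [simp del]

lemma attractor_upto_Suc_mono: "attractor_upto G k \<subseteq> attractor_upto G (Suc k)"
proof (induction k)
  case 0
  show ?case by (simp add: mem_attractor_upto_Suc)
next
  case (Suc k)
  show ?case
  proof
    fix s assume "s \<in> attractor_upto G (Suc k)"
    with Suc.IH show "s \<in> attractor_upto G (Suc (Suc k))"
      unfolding mem_attractor_upto_Suc[of s G "Suc k"] mem_attractor_upto_Suc[of s G k]
      by (cases "kind G (fst s) = NondetLoc") auto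
  qed
qed

lemma mono_attractor_upto: "mono (attractor_upto G)"
  by (rule monoI, rule lift_Suc_mono_le) (rule attractor_upto_Suc_mono)

lemma nondet_successor_notin_attractor:
  fixes s :: "('l::finite, 'v) state"
  assumes "kind G (fst s) = NondetLoc" "s \<notin> attractor G"
  shows "\<exists>s'. succ G s s' \<and> s' \<notin> attractor G"
proof (rule ccontr)
  assume "\<not> ?thesis"
  then have "{s'. succ G s s'} \<subseteq> (\<Union>k. attractor_upto G k)"
    unfolding attractor_def by blast
  then obtain k where "{s'. succ G s s'} \<subseteq> attractor_upto G k"
    using finite_subset_UN_mono[OF finite_successors mono_attractor_upto] by blast
  with assms(1) have "s \<in> attractor_upto G (Suc k)"
    by (simp add: mem_attractor_upto_Suc subset_iff)
  with assms(2) show False unfolding attractor_def by blast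
qed

lemma successor_notin_attractor:
  assumes "kind G (fst s) \<noteq> NondetLoc" "s \<notin> attractor G" "succ G s s'"
  shows "s' \<notin> attractor G"
proof
  assume "s' \<in> attractor G"
  then obtain k where "s' \<in> attractor_upto G k" unfolding attractor_def by blast
  with assms(1,3) have "s \<in> attractor_upto G (Suc k)"
    unfolding mem_attractor_upto_Suc by (auto simp del: split_paired_Ex)
  with assms(2) show False unfolding attractor_def by blast
qed

lemma term_state_in_attractor: "term_state G \<in> attractor G"
  unfolding attractor_def using attractor_upto.simps(1) by blast

lemma attractor_upto_consistent_path:
  assumes "last \<pi> \<in> attractor_upto G k" "is_path G \<pi>" "consistent G sch \<pi>"
    and "sch \<in> schedulers G"
  shows "\<exists>\<rho>. length \<rho> \<le> k \<and> is_path G (\<pi> @ \<rho>) \<and> last (\<pi> @ \<rho>) = term_state G \<and>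
           consistent G sch (\<pi> @ \<rho>)"
  using assms(1-3)
proof (induction k arbitrary: \<pi>)
  case 0
  then show ?case by (intro exI[of _ "[]"]) auto
next
  case (Suc k)
  have "\<pi> \<noteq> []" using Suc.prems(2) unfolding is_path_def by blast
  show ?case
  proof (cases "last \<pi> = term_state G")
    case True
    with Suc.prems show ?thesis by (intro exI[of _ "[]"]) auto
  next
    case False
    obtain s where s: "succ G (last \<pi>) s" "s \<in> attractor_upto G k"
      and s_sch: "kind G (fst (last \<pi>)) = NondetLoc \<Longrightarrow> s = sch \<pi>"
    proof (cases "kind G (fst (last \<pi>)) = NondetLoc")
      case True
      then have "succ G (last \<pi>) (sch \<pi>)"
        using assms(4) Suc.prems(2) unfolding schedulers_def by blast
      with True Suc.prems(1) \<open>last \<pi> \<noteq> term_state G\<close> show ?thesis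
        using that unfolding mem_attractor_upto_Suc by (simp del: split_paired_All)
    next
      case False
      with Suc.prems(1) \<open>last \<pi> \<noteq> term_state G\<close> show ?thesis
        using that unfolding mem_attractor_upto_Suc by auto
    qed
    have "is_path G (\<pi> @ [s])" "consistent G sch (\<pi> @ [s])"
      using Suc.prems(2,3) s(1) s_sch \<open>\<pi> \<noteq> []\<close> by (simp_all add: is_path_snoc_iff consistent_snoc_iff)
    with Suc.IH[of "\<pi> @ [s]"] s(2) obtain \<rho> where
      "length \<rho> \<le> k" "is_path G (\<pi> @ s # \<rho>)" "last (\<pi> @ s # \<rho>) = term_state G"
      "consistent G sch (\<pi> @ s # \<rho>)"
      by auto
    then show ?thesis by (intro exI[of _ "s # \<rho>"]) auto
  qed
qed

definition escape_sched :: "('l, 'v) cfg \<Rightarrow> ('l, 'v) state list \<Rightarrow> ('l, 'v) state" where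
  "escape_sched G \<pi> =
     (SOME s. succ G (last \<pi>) s \<and> (last \<pi> \<notin> attractor G \<longrightarrow> s \<notin> attractor G))"

lemma escape_sched:
  fixes G :: "('l::finite, 'v) cfg"
  assumes "wf_cfg G" "kind G (fst (last \<pi>)) = NondetLoc"
  shows "succ G (last \<pi>) (escape_sched G \<pi>)"
    and "last \<pi> \<notin> attractor G \<Longrightarrow> escape_sched G \<pi> \<notin> attractor G"
proof -
  have "\<exists>s. succ G (last \<pi>) s \<and> (last \<pi> \<notin> attractor G \<longrightarrow> s \<notin> attractor G)"
  proof (cases "last \<pi> \<in> attractor G")
    case True
    then show ?thesis using assms(1) unfolding wf_cfg_def by blast
  next
    case False
    then show ?thesis using nondet_successor_notin_attractor[OF assms(2)] by blast
  qed
  from someI_ex[OF this]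
  show "succ G (last \<pi>) (escape_sched G \<pi>)"
    and "last \<pi> \<notin> attractor G \<Longrightarrow> escape_sched G \<pi> \<notin> attractor G"
    unfolding escape_sched_def by blast+
qed

lemma escape_sched_in_schedulers:
  fixes G :: "('l::finite, 'v) cfg"
  shows "wf_cfg G \<Longrightarrow> escape_sched G \<in> schedulers G"
  unfolding schedulers_def using escape_sched(1) by blast

lemma consistent_escape_sched_avoids_attractor:
  fixes G :: "('l::finite, 'v) cfg"
  assumes "wf_cfg G" "hd \<pi> \<notin> attractor G"
    and "is_path G \<pi>" "consistent G (escape_sched G) \<pi>"
  shows "set \<pi> \<inter> attractor G = {}"
  using assms(2-)
proof (induction \<pi> rule: rev_induct)
  case (snoc s \<pi>)
  show ?case
  proof (cases "\<pi> = []")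
    case False
    with snoc.prems have "is_path G \<pi>" "succ G (last \<pi>) s"
      and "consistent G (escape_sched G) \<pi>"
      and s_sch: "kind G (fst (last \<pi>)) = NondetLoc \<Longrightarrow> s = escape_sched G \<pi>"
      by (simp_all add: is_path_snoc_iff consistent_snoc_iff)
    with snoc.IH snoc.prems(1) False have "set \<pi> \<inter> attractor G = {}" by simp
    then have "last \<pi> \<notin> attractor G" using False last_in_set by blast
    then have "s \<notin> attractor G"
      using escape_sched(2)[OF assms(1)] s_sch successor_notin_attractor \<open>succ G (last \<pi>) s\<close>
      by blast
    with \<open>set \<pi> \<inter> attractor G = {}\<close> show ?thesis by simp
  qed (use snoc.prems(1) in simp)
qed simp

lemma pr_term_eq_0_if_notin_attractor:
  fixes G :: "('l::finite, 'v) cfg"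
  assumes "wf_cfg G" "\<sigma> \<notin> attractor G"
  shows "pr_term G \<sigma> = 0"
proof -
  have "\<not> consistent G (escape_sched G) \<pi>"
    if "is_path G \<pi>" "hd \<pi> = \<sigma>" "term_state G \<in> set \<pi>" for \<pi>
    using consistent_escape_sched_avoids_attractor[OF assms(1), of \<pi>] that assms(2)
      term_state_in_attractor by blast
  then have "reach_prob G \<sigma> (escape_sched G) = 0"
    unfolding reach_prob_def by (simp add: cyl_prob_eq_0_if_not_consistent)
  moreover have "pr_term G \<sigma> \<le> reach_prob G \<sigma> (escape_sched G)"
    unfolding pr_term_def using escape_sched_in_schedulers[OF assms(1)] by (rule INF_lower)
  ultimately show ?thesis by simp
qed

theorem mainTheorem1:
  fixes G :: "('l::finite, 'v::finite) cfg" and \<sigma> :: "('l, 'v) state"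
  assumes "wf_cfg G"
    and "pr_term G \<sigma> > 0"
  shows "\<exists>N::nat. \<forall>sch \<in> schedulers G. \<exists>\<pi>.
           is_path G \<pi> \<and> hd \<pi> = \<sigma> \<and> last \<pi> = term_state G \<and>
           length \<pi> \<le> Suc N \<and> consistent G sch \<pi>"
proof -
  have "\<sigma> \<in> attractor G"
    using pr_term_eq_0_if_notin_attractor[OF assms(1)] assms(2) by (metis less_irrefl)
  then obtain N where N: "last [\<sigma>] \<in> attractor_upto G N" unfolding attractor_def by auto
  have "is_path G [\<sigma>]" "consistent G sch [\<sigma>]" for sch
    unfolding is_path_def consistent_def by simp_all
  then have "\<forall>sch \<in> schedulers G. \<exists>\<rho>. length \<rho> \<le> N \<and> is_path G ([\<sigma>] @ \<rho>) \<and>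
               last ([\<sigma>] @ \<rho>) = term_state G \<and> consistent G sch ([\<sigma>] @ \<rho>)"
    using attractor_upto_consistent_path[OF N] by blast
  then show ?thesis by (intro exI[of _ N]) fastforce
qed

end
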